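(* If $G$ is a $\mathrm{sat}(n,K_{2,3})$-graph with minimum degree $\delta(G) = 1$, then $e(G) \geq 2n-3$.
   Context: All graphs are finite and simple. A graph $G$ is $K_{2,3}$-saturated if $G$ contains no subgraph isomorphic to $K_{2,3}$, but for every pair of nonadjacent vertices $u,v$, the graph $G+uv$ contains a subgraph isomorphic to $K_{2,3}$. $\mathrm{sat}(n,K_{2,3})$ is the minimum number of edges of a $K_{2,3}$-saturated graph on $n$ vertices, and a $\mathrm{sat}(n,K_{2,3})$-graph is a $K_{2,3}$-saturated graph on $n$ vertices with exactly $\mathrm{sat}(n,K_{2,3})$ edges. $e(G)$ is the number of edges and $\delta(G)$ the minimum degree of $G$. *)

theory Defs
  imports Main
begin

definition simple_graph :: "'a set \<Rightarrow> 'a set set \<Rightarrow> bool" where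
  "simple_graph V E \<longleftrightarrow> finite V \<and>
     (\<forall>e\<in>E. \<exists>u v. e = {u, v} \<and> u \<noteq> v \<and> u \<in> V \<and> v \<in> V)"

definition contains_K23 :: "'a set \<Rightarrow> 'a set set \<Rightarrow> bool" where
  "contains_K23 V E \<longleftrightarrow>
     (\<exists>a1 a2 b1 b2 b3. a1 \<in> V \<and> a2 \<in> V \<and> b1 \<in> V \<and> b2 \<in> V \<and> b3 \<in> V \<and>
        distinct [a1, a2, b1, b2, b3] \<and>
        (\<forall>a\<in>{a1, a2}. \<forall>b\<in>{b1, b2, b3}. {a, b} \<in> E))"

definition K23_saturated :: "'a set \<Rightarrow> 'a set set \<Rightarrow> bool" where
  "K23_saturated V E \<longleftrightarrow> simple_graph V E \<and> \<not> contains_K23 V E \<and>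
     (\<forall>u\<in>V. \<forall>v\<in>V. u \<noteq> v \<and> {u, v} \<notin> E \<longrightarrow> contains_K23 V (insert {u, v} E))"

text \<open>sat(n, K_{2,3}): the minimum number of edges of a K_{2,3}-saturated graph
  on n vertices (vertex set taken to be {0..<n}; the notion is invariant
  under isomorphism).\<close>
definition sat_K23 :: "nat \<Rightarrow> nat" where
  "sat_K23 n = (LEAST m. \<exists>E. K23_saturated {0..<n} E \<and> card E = m)"

definition sat_K23_graph :: "'a set \<Rightarrow> 'a set set \<Rightarrow> bool" where
  "sat_K23_graph V E \<longleftrightarrow> K23_saturated V E \<and> card E = sat_K23 (card V)"

definition degree :: "'a set \<Rightarrow> 'a set set \<Rightarrow> 'a \<Rightarrow> nat" where
  "degree V E v = card {u\<in>V. {u, v} \<in> E}"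

definition min_degree :: "'a set \<Rightarrow> 'a set set \<Rightarrow> nat" where
  "min_degree V E = Min (degree V E ` V)"

end

theory Submission imports Defs begin

(* Let x be a vertex of degree 1 and y its unique neighbour.
   For every vertex w other than x and y, the graph G + xw contains a K_{2,3};
   since G itself is K_{2,3}-free and x has only the neighbours y and w in
   G + xw, this copy has x on its 3-side and {y, w} as its 2-side.  Hence w and
   y have two common neighbours different from x, i.e. every w in
   V - {x, y} has at least two neighbours in A = N(y) - {x}.  Put
   B = V - {x, y} - A.  Counting edges:
     - the edge xy and the |A| edges from y to A;
     - at least |A| edges inside A (every vertex of A has two neighbours in A);
     - at least 2|B| edges between A and B.
   Altogether e(G) >= 1 + 2|A| + 2|B| = 1 + 2(n - 2) = 2n - 3.
   The file first proves the two double-counting bounds for edges inside a set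
   and between two sets, then the common-neighbour property of a pendant
   vertex, then the edge bound, from which the theorem follows directly. *)

definition neighbours :: "'a set \<Rightarrow> 'a set set \<Rightarrow> 'a \<Rightarrow> 'a set" where
  "neighbours V E v = {u\<in>V. {u, v} \<in> E}"

lemma degree_eq_card_neighbours: "degree V E v = card (neighbours V E v)"
  by (simp add: degree_def neighbours_def)

lemma simple_graph_card_edge:
  assumes "simple_graph V E" "e \<in> E"
  shows "card e = 2"
  using assms by (auto simp: simple_graph_def)

lemma simple_graph_finite_edges:
  assumes "simple_graph V E"
  shows "finite E"
proof -
  have "E \<subseteq> Pow V" using assms by (auto simp: simple_graph_def)
  then show ?thesis using assms by (auto simp: simple_graph_def intro: finite_subset)
qed

lemma sum_incidences:
  assumes "finite C" "finite H" "\<forall>e\<in>H. card (e \<inter> C) = k"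
  shows "(\<Sum>w\<in>C. card {e\<in>H. w \<in> e}) = k * card H"
proof -
  have "(\<Sum>w\<in>C. card {e\<in>H. w \<in> e}) = (\<Sum>w\<in>C. \<Sum>e\<in>H. if w \<in> e then 1 else 0)"
    using assms by (intro sum.cong refl) (simp add: sum.If_cases Int_def conj_commute)
  also have "\<dots> = (\<Sum>e\<in>H. \<Sum>w\<in>C. if w \<in> e then 1 else 0)"
    by (rule sum.swap)
  also have "\<dots> = (\<Sum>e\<in>H. card (e \<inter> C))"
    using assms by (simp add: sum.If_cases Int_commute)
  also have "\<dots> = k * card H"
    using assms by simp
  finally show ?thesis .
qed

lemma incidence_bound:
  assumes "finite C" "finite H" "\<forall>e\<in>H. card (e \<inter> C) = k"
    and "\<forall>w\<in>C. d \<le> card {e\<in>H. w \<in> e}"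
  shows "d * card C \<le> k * card H"
proof -
  have "d * card C = (\<Sum>w\<in>C. d)" by simp
  also have "\<dots> \<le> (\<Sum>w\<in>C. card {e\<in>H. w \<in> e})"
    using assms(4) by (intro sum_mono) simp
  also have "\<dots> = k * card H"
    using assms(1-3) by (rule sum_incidences)
  finally show ?thesis .
qed

lemma card_incident_edges:
  assumes "finite H" "\<forall>u\<in>S. {w, u} \<in> H \<and> u \<noteq> w"
  shows "card S \<le> card {e\<in>H. w \<in> e}"
proof -
  have "inj_on (\<lambda>u. {w, u}) S"
    using assms(2) by (auto simp: inj_on_def doubleton_eq_iff)
  then have "card S = card ((\<lambda>u. {w, u}) ` S)" by (simp add: card_image)
  also have "\<dots> \<le> card {e\<in>H. w \<in> e}"
    using assms by (intro card_mono) auto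
  finally show ?thesis .
qed

lemma edges_inside_bound:
  assumes "finite E" "\<forall>e\<in>E. card e = 2" "finite A"
    and "\<forall>w\<in>A. d \<le> card {u\<in>A. {w, u} \<in> E}"
  shows "d * card A \<le> 2 * card {e\<in>E. e \<subseteq> A}"
proof (rule incidence_bound)
  show "\<forall>e\<in>{e\<in>E. e \<subseteq> A}. card (e \<inter> A) = 2"
    using assms(2) by (simp add: Int_absorb2)
  show "\<forall>w\<in>A. d \<le> card {e\<in>{e\<in>E. e \<subseteq> A}. w \<in> e}"
  proof
    fix w assume w: "w \<in> A"
    have "\<forall>u\<in>{u\<in>A. {w, u} \<in> E}. {w, u} \<in> {e\<in>E. e \<subseteq> A} \<and> u \<noteq> w"
      using w assms(2) by fastforce
    then have "card {u\<in>A. {w, u} \<in> E} \<le> card {e\<in>{e\<in>E. e \<subseteq> A}. w \<in> e}"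
      using assms(1) by (intro card_incident_edges) auto
    then show "d \<le> card {e\<in>{e\<in>E. e \<subseteq> A}. w \<in> e}"
      using assms(4) w by (meson order_trans)
  qed
qed (use assms in auto)

lemma edges_between_bound:
  assumes "finite E" "finite B" "A \<inter> B = {}"
    and "\<forall>w\<in>B. d \<le> card {u\<in>A. {w, u} \<in> E}"
  shows "d * card B \<le> card {e\<in>E. \<exists>a\<in>A. \<exists>b\<in>B. e = {a, b}}"
proof -
  let ?G = "{e\<in>E. \<exists>a\<in>A. \<exists>b\<in>B. e = {a, b}}"
  have "d * card B \<le> 1 * card ?G"
  proof (rule incidence_bound)
    show "\<forall>e\<in>?G. card (e \<inter> B) = 1"
    proof
      fix e assume "e \<in> ?G"
      then obtain a b where "a \<in> A" "b \<in> B" "e = {a, b}" by blast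
      then have "e \<inter> B = {b}" using assms(3) by auto
      then show "card (e \<inter> B) = 1" by simp
    qed
    show "\<forall>w\<in>B. d \<le> card {e\<in>?G. w \<in> e}"
    proof
      fix w assume w: "w \<in> B"
      have "\<forall>u\<in>{u\<in>A. {w, u} \<in> E}. {w, u} \<in> ?G \<and> u \<noteq> w"
        using w assms(3) by (auto simp: insert_commute)
      then have "card {u\<in>A. {w, u} \<in> E} \<le> card {e\<in>?G. w \<in> e}"
        using assms(1) by (intro card_incident_edges) auto
      then show "d \<le> card {e\<in>?G. w \<in> e}"
        using assms(4) w by (meson order_trans)
    qed
  qed (use assms in auto)
  then show ?thesis by simp
qed

text \<open>The K_{2,3} created by adding xv must use
  the new edge; x cannot be on its 2-side (x would need three neighbours), so
  x is on the 3-side, the 2-side is {y, v}, and the two remaining vertices of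
  the 3-side are common neighbours of y and v in G.\<close>

lemma pendant_common_neighbours:
  assumes sat: "K23_saturated V E" and x: "x \<in> V" and N: "neighbours V E x = {y}"
    and v: "v \<in> V" "v \<noteq> x" "v \<noteq> y"
  shows "2 \<le> card {u\<in>neighbours V E y \<inter> neighbours V E v. u \<noteq> x}"
proof -
  let ?E' = "insert {x, v} E"
  have fin: "finite V" using sat by (simp add: K23_saturated_def simple_graph_def)
  have "{x, v} \<notin> E" using N v by (auto simp: neighbours_def insert_commute)
  then have "contains_K23 V ?E'" using sat x v by (auto simp: K23_saturated_def)
  then obtain a1 a2 b1 b2 b3 where V: "a1 \<in> V" "a2 \<in> V" "b1 \<in> V" "b2 \<in> V" "b3 \<in> V"
      and dist: "distinct [a1, a2, b1, b2, b3]"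
      and K: "\<forall>a\<in>{a1, a2}. \<forall>b\<in>{b1, b2, b3}. {a, b} \<in> ?E'"
    unfolding contains_K23_def by blast
  let ?Bs = "{b1, b2, b3}"
  have card_Bs: "card ?Bs = 3" using dist by simp
  have x_nbrs: "u \<in> {y, v}" if "u \<in> V" "{x, u} \<in> ?E'" for u
    using N that by (auto simp: neighbours_def insert_commute doubleton_eq_iff)
  have old_edge: "{a, b} \<in> E" if "{a, b} \<in> ?E'" "a \<noteq> x" "b \<noteq> x" for a b
    using that by (auto simp: doubleton_eq_iff)
  have x_not_A: "x \<notin> {a1, a2}"
  proof
    assume "x \<in> {a1, a2}"
    then have "?Bs \<subseteq> {y, v}" using K V x_nbrs by blast
    then have "card ?Bs \<le> card {y, v}" by (intro card_mono) auto
    also have "\<dots> \<le> 2" by (simp add: card_insert_le_m1)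
    finally show False using card_Bs by simp
  qed
  have x_in_Bs: "x \<in> ?Bs"
  proof (rule ccontr)
    assume "x \<notin> ?Bs"
    then have "\<forall>a\<in>{a1, a2}. \<forall>b\<in>?Bs. {a, b} \<in> E" using K x_not_A old_edge by blast
    then have "contains_K23 V E" using V dist unfolding contains_K23_def by blast
    then show False using sat by (simp add: K23_saturated_def)
  qed
  have "a1 \<in> {y, v}" "a2 \<in> {y, v}"
    using K V x_in_Bs x_nbrs by (metis insert_commute insertCI)+
  then have A_eq: "{a1, a2} = {y, v}" using dist v(3) by auto
  have "?Bs - {x} \<subseteq> {u\<in>neighbours V E y \<inter> neighbours V E v. u \<noteq> x}"
    using K V A_eq x_not_A old_edge by (auto simp: neighbours_def insert_commute)
  then have "card (?Bs - {x}) \<le> card {u\<in>neighbours V E y \<inter> neighbours V E v. u \<noteq> x}"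
    using fin by (intro card_mono) (auto simp: neighbours_def)
  moreover have "card (?Bs - {x}) = 2" using card_Bs x_in_Bs by simp
  ultimately show ?thesis by simp
qed

lemma card_partition_pair:
  assumes "finite V" "x \<in> V" "y \<in> V" "y \<noteq> x" "A \<subseteq> V - {x, y}"
  shows "card V = 2 + card A + card (V - {x, y} - A)"
proof -
  have "card (V - {x, y}) = card V - 2" using assms(1-4) by (simp add: card_Diff_subset)
  moreover have "card (V - {x, y} - A) = card (V - {x, y}) - card A"
    using assms(1,5) by (simp add: card_Diff_subset finite_subset)
  moreover have "card A \<le> card (V - {x, y})" using assms(1,5) by (intro card_mono) auto
  moreover have "card {x, y} \<le> card V" using assms(1-3) by (intro card_mono) auto
  ultimately show ?thesis using assms(4) by simp
qed

lemma pendant_edge_bound: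
  assumes sat: "K23_saturated V E" and x: "x \<in> V" and N: "neighbours V E x = {y}"
  shows "2 * card V \<le> card E + 3"
proof -
  have sg: "simple_graph V E" using sat by (simp add: K23_saturated_def)
  have finV: "finite V" using sg by (simp add: simple_graph_def)
  have finE: "finite E" using sg by (rule simple_graph_finite_edges)
  have two: "\<forall>e\<in>E. card e = 2" using sg simple_graph_card_edge by blast
  have y: "y \<in> V" "{x, y} \<in> E" using N by (auto simp: neighbours_def insert_commute)
  have yx: "y \<noteq> x" using y(2) two by fastforce
  define A where "A = neighbours V E y - {x}"
  define B where "B = V - {x, y} - A"
  have A_sub: "A \<subseteq> V - {x, y}" using two by (fastforce simp: A_def neighbours_def)
  have finA: "finite A" and finB: "finite B" using finV A_sub by (auto simp: B_def intro: finite_subset)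
  have card_V: "card V = 2 + card A + card B"
    unfolding B_def using finV x y(1) yx A_sub by (rule card_partition_pair)
  have into_A: "\<forall>w\<in>V - {x, y}. 2 \<le> card {u\<in>A. {w, u} \<in> E}"
  proof
    fix w assume "w \<in> V - {x, y}"
    then have "2 \<le> card {u\<in>neighbours V E y \<inter> neighbours V E w. u \<noteq> x}"
      using pendant_common_neighbours[OF sat x N] by auto
    moreover have "{u\<in>neighbours V E y \<inter> neighbours V E w. u \<noteq> x} = {u\<in>A. {w, u} \<in> E}"
      by (auto simp: A_def neighbours_def insert_commute)
    ultimately show "2 \<le> card {u\<in>A. {w, u} \<in> E}" by simp
  qed
  define Y where "Y = (\<lambda>a. {y, a}) ` A"
  define F where "F = {e\<in>E. e \<subseteq> A}"
  define G where "G = {e\<in>E. \<exists>a\<in>A. \<exists>b\<in>B. e = {a, b}}"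
  have card_Y: "card Y = card A"
    unfolding Y_def by (rule card_image) (auto simp: inj_on_def doubleton_eq_iff)
  have card_F: "2 * card A \<le> 2 * card F"
    unfolding F_def using finE two finA into_A A_sub by (intro edges_inside_bound) auto
  have card_G: "2 * card B \<le> card G"
    unfolding G_def using finE finB into_A by (intro edges_between_bound) (auto simp: B_def)
  have "insert {x, y} (Y \<union> F \<union> G) \<subseteq> E"
    using y by (auto simp: Y_def F_def G_def A_def neighbours_def insert_commute)
  then have "card (insert {x, y} (Y \<union> F \<union> G)) \<le> card E"
    using finE by (rule card_mono[rotated])
  moreover have "card (insert {x, y} (Y \<union> F \<union> G)) = 1 + card Y + card F + card G"
  proof -
    have out: "x \<notin> A" "y \<notin> A" "x \<notin> B" "y \<notin> B" "A \<inter> B = {}"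
      using A_sub by (auto simp: B_def)
    have "Y \<inter> F = {}" using out by (auto simp: Y_def F_def)
    moreover have "(Y \<union> F) \<inter> G = {}" using out by (auto simp: Y_def F_def G_def doubleton_eq_iff)
    moreover have "{x, y} \<notin> Y \<union> F \<union> G"
      using out yx by (auto simp: Y_def F_def G_def doubleton_eq_iff)
    moreover have "finite Y" "finite F" "finite G" using finA finE by (auto simp: Y_def F_def G_def)
    ultimately show ?thesis by (simp add: card_Un_disjoint)
  qed
  ultimately show ?thesis using card_V card_Y card_F card_G by linarith
qed

lemma pendant_vertex_exists:
  assumes "finite V" "V \<noteq> {}" "min_degree V E = 1"
  obtains x y where "x \<in> V" "neighbours V E x = {y}"
proof -
  have "1 \<in> degree V E ` V"
    using assms unfolding min_degree_def by (metis Min_in finite_imageI image_is_empty)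
  then obtain x where "x \<in> V" "card (neighbours V E x) = 1"
    by (auto simp: degree_eq_card_neighbours)
  then show thesis using that by (meson card_1_singletonE)
qed

theorem lemma4p1:
  fixes V :: "'a set" and E :: "'a set set" and n :: nat
  assumes "card V = n"
    and "sat_K23_graph V E"
    and "min_degree V E = 1"
  shows "int (card E) \<ge> 2 * int n - 3"
proof -
  have sat: "K23_saturated V E" using assms(2) by (simp add: sat_K23_graph_def)
  then have fin: "finite V" by (simp add: K23_saturated_def simple_graph_def)
  show ?thesis
  proof (cases "V = {}")
    case True
    then show ?thesis using assms(1) by simp
  next
    case False
    obtain x y where "x \<in> V" "neighbours V E x = {y}"
      using pendant_vertex_exists[OF fin False assms(3)] .
    then have "2 * card V \<le> card E + 3" using sat by (rule pendant_edge_bound[rotated])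
    then show ?thesis using assms(1) by linarith
  qed
qed

end
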